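(* Every $\mathcal{TPTG}$-regular Lawson paratopological group is a topological group, where $\mathcal{TPTG}$ denotes the class of topologically periodic topological groups.
   Context: All topological spaces are Hausdorff. A paratopological group is a group with a Hausdorff topology making multiplication continuous; a topological group additionally has continuous inversion. A paratopological group is Lawson if it has a neighborhood base at the unit consisting of subsemigroups. A paratopological group $G$ is topologically periodic if for every $x\in G$ and every neighborhood $U$ of the unit there is $n\ge1$ with $x^n\in U$. A continuous map $h:X\to Y$ is regular if for each $x\in X$ and neighborhood $U$ of $x$ there is a closed $F\subset Y$ such that $h^{-1}(F)$ is a closed neighborhood of $x$ contained in $U$. For a class $\mathcal G$ of topological groups, a paratopological group is $\mathcal G$-regular if it admits a regular continuous homomorphism onto a topological group belonging to $\mathcal G$. *)

theory Defs
  imports "HOL-Analysis.Analysis" "HOL-Algebra.Group"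
begin

definition paratopological_group :: "('a, 'm) monoid_scheme \<Rightarrow> 'a topology \<Rightarrow> bool" where
  "paratopological_group G T \<longleftrightarrow>
     group G \<and> topspace T = carrier G \<and> Hausdorff_space T \<and>
     continuous_map (prod_topology T T) T (\<lambda>(x, y). x \<otimes>\<^bsub>G\<^esub> y)"

definition topological_group :: "('a, 'm) monoid_scheme \<Rightarrow> 'a topology \<Rightarrow> bool" where
  "topological_group G T \<longleftrightarrow>
     paratopological_group G T \<and> continuous_map T T (\<lambda>x. inv\<^bsub>G\<^esub> x)"

definition Lawson :: "('a, 'm) monoid_scheme \<Rightarrow> 'a topology \<Rightarrow> bool" where
  "Lawson G T \<longleftrightarrow>
     (\<forall>U. openin T U \<and> \<one>\<^bsub>G\<^esub> \<in> U \<longrightarrow>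
        (\<exists>V. V \<subseteq> U \<and> \<one>\<^bsub>G\<^esub> \<in> T interior_of V \<and>
             (\<forall>x\<in>V. \<forall>y\<in>V. x \<otimes>\<^bsub>G\<^esub> y \<in> V)))"

definition topologically_periodic :: "('a, 'm) monoid_scheme \<Rightarrow> 'a topology \<Rightarrow> bool" where
  "topologically_periodic G T \<longleftrightarrow>
     (\<forall>x\<in>carrier G. \<forall>U. openin T U \<and> \<one>\<^bsub>G\<^esub> \<in> U \<longrightarrow>
        (\<exists>n::nat. n \<ge> 1 \<and> x [^]\<^bsub>G\<^esub> n \<in> U))"

definition regular_map :: "'a topology \<Rightarrow> 'b topology \<Rightarrow> ('a \<Rightarrow> 'b) \<Rightarrow> bool" where
  "regular_map X Y h \<longleftrightarrow>
     continuous_map X Y h \<and>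
     (\<forall>x\<in>topspace X. \<forall>U. openin X U \<and> x \<in> U \<longrightarrow>
        (\<exists>F. closedin Y F \<and>
             closedin X {z \<in> topspace X. h z \<in> F} \<and>
             x \<in> X interior_of {z \<in> topspace X. h z \<in> F} \<and>
             {z \<in> topspace X. h z \<in> F} \<subseteq> U))"

text \<open>h is a regular continuous homomorphism of (G,T) onto the topologically periodic
 topological group (H,S). A paratopological group is TPTG-regular iff such H, S, h exist.\<close>
definition TPTG_regular_witness ::
  "('a, 'm) monoid_scheme \<Rightarrow> 'a topology \<Rightarrow> ('b, 'n) monoid_scheme \<Rightarrow> 'b topology \<Rightarrow> ('a \<Rightarrow> 'b) \<Rightarrow> bool" where
  "TPTG_regular_witness G T H S h \<longleftrightarrow>
     topological_group H S \<and> topologically_periodic H S \<and>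
     h \<in> hom G H \<and> h ` carrier G = carrier H \<and> regular_map T S h"

end

theory Submission
  imports Defs
begin

text \<open>Take a Lawson neighbourhood \<open>V\<close> of the unit inside a set \<open>h\<^sup>-\<^sup>1(F)\<close> supplied by
regularity of \<open>h\<close>. For \<open>x \<in> V\<close> all powers of \<open>h x\<close> lie in the closed set \<open>F\<close>, and in a
topologically periodic group a closed set containing all powers of an element contains its
inverse. Hence \<open>x\<^sup>-\<^sup>1 \<in> h\<^sup>-\<^sup>1(F)\<close>, i.e. inversion is continuous at the unit, and translations
make it continuous everywhere.\<close>

lemma paratopological_group_continuous_map_mult_left:
  assumes "paratopological_group G T" "a \<in> carrier G"
  shows "continuous_map T T (\<lambda>y. a \<otimes>\<^bsub>G\<^esub> y)"
proof -
  have mult: "continuous_map (prod_topology T T) T (\<lambda>(x, y). x \<otimes>\<^bsub>G\<^esub> y)"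
    and "topspace T = carrier G"
    using assms(1) unfolding paratopological_group_def by auto
  then have "continuous_map T (prod_topology T T) (\<lambda>y. (a, y))"
    using assms(2) by (intro continuous_map_pairedI) auto
  from continuous_map_compose[OF this mult] show ?thesis by (simp add: o_def)
qed

lemma paratopological_group_continuous_map_mult_right:
  assumes "paratopological_group G T" "a \<in> carrier G"
  shows "continuous_map T T (\<lambda>y. y \<otimes>\<^bsub>G\<^esub> a)"
proof -
  have mult: "continuous_map (prod_topology T T) T (\<lambda>(x, y). x \<otimes>\<^bsub>G\<^esub> y)"
    and "topspace T = carrier G"
    using assms(1) unfolding paratopological_group_def by auto
  then have "continuous_map T (prod_topology T T) (\<lambda>y. (y, a))"
    using assms(2) by (intro continuous_map_pairedI) auto
  from continuous_map_compose[OF this mult] show ?thesis by (simp add: o_def)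
qed

lemma topological_group_if_inv_continuous_at_one:
  fixes G (structure)
  assumes P: "paratopological_group G T"
    and inv_at_one: "\<And>U. openin T U \<Longrightarrow> \<one>\<^bsub>G\<^esub> \<in> U \<Longrightarrow>
                       \<exists>W. openin T W \<and> \<one>\<^bsub>G\<^esub> \<in> W \<and> (\<forall>x\<in>W. inv\<^bsub>G\<^esub> x \<in> U)"
  shows "topological_group G T"
proof -
  interpret group G using P by (simp add: paratopological_group_def)
  have ts: "topspace T = carrier G" using P by (simp add: paratopological_group_def)
  have "openin T {x \<in> topspace T. inv x \<in> U'}" if U': "openin T U'" for U'
  proof (subst openin_subopen, intro ballI)
    fix x assume "x \<in> {x \<in> topspace T. inv x \<in> U'}"
    then have xG: "x \<in> carrier G" and xU': "inv x \<in> U'" using ts by auto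
    define U where "U = {y \<in> topspace T. inv x \<otimes> y \<in> U'}"
    have "openin T U"
      unfolding U_def
      by (rule openin_continuous_map_preimage
            [OF paratopological_group_continuous_map_mult_left[OF P inv_closed[OF xG]] U'])
    moreover have "\<one> \<in> U" using xU' xG ts by (simp add: U_def)
    ultimately obtain W where W: "openin T W" "\<one> \<in> W" and WU: "\<forall>w\<in>W. inv w \<in> U"
      using inv_at_one by blast
    define W' where "W' = {z \<in> topspace T. z \<otimes> inv x \<in> W}"
    have "openin T W'"
      unfolding W'_def
      by (rule openin_continuous_map_preimage
            [OF paratopological_group_continuous_map_mult_right[OF P inv_closed[OF xG]] W(1)])
    moreover have "x \<in> W'" using W xG ts by (simp add: W'_def)
    moreover have "W' \<subseteq> {x \<in> topspace T. inv x \<in> U'}"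
    proof
      fix z assume zW': "z \<in> W'"
      then have zG: "z \<in> carrier G" using ts W'_def by auto
      have "inv (z \<otimes> inv x) = x \<otimes> inv z" using xG zG by (simp add: inv_mult_group)
      moreover have "inv x \<otimes> (x \<otimes> inv z) = inv z" using xG zG by (simp add: m_assoc[symmetric])
      ultimately show "z \<in> {x \<in> topspace T. inv x \<in> U'}"
        using WU zW' zG ts by (auto simp: W'_def U_def)
    qed
    ultimately show "\<exists>V. openin T V \<and> x \<in> V \<and> V \<subseteq> {x \<in> topspace T. inv x \<in> U'}"
      by blast
  qed
  then have "continuous_map T T (\<lambda>x. inv x)"
    using ts by (simp add: continuous_map_def)
  with P show ?thesis by (simp add: topological_group_def)
qed

lemma (in group) nat_pow_Suc_in_subsemigroup:
  assumes "x \<in> V" "V \<subseteq> carrier G" "\<forall>a\<in>V. \<forall>b\<in>V. a \<otimes> b \<in> V"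
  shows "x [^] Suc k \<in> V"
proof (induction k)
  case 0
  then show ?case using assms by auto
next
  case (Suc k)
  then show ?case using assms by (metis nat_pow_Suc)
qed

lemma topologically_periodic_inv_in_closed_powers:
  fixes H (structure)
  assumes P: "paratopological_group H S" and TP: "topologically_periodic H S"
    and F: "closedin S F" and x: "x \<in> carrier H"
    and powers: "\<And>n::nat. x [^]\<^bsub>H\<^esub> n \<in> F"
  shows "inv\<^bsub>H\<^esub> x \<in> F"
proof (rule ccontr)
  interpret group H using P by (simp add: paratopological_group_def)
  have ts: "topspace S = carrier H" using P by (simp add: paratopological_group_def)
  assume "inv x \<notin> F"
  define Op where "Op = {y \<in> topspace S. inv x \<otimes> y \<in> topspace S - F}"
  have "openin S Op"
    unfolding Op_def
    by (rule openin_continuous_map_preimage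
          [OF paratopological_group_continuous_map_mult_left[OF P inv_closed[OF x]]])
       (use F in auto)
  moreover have "\<one> \<in> Op" using \<open>inv x \<notin> F\<close> x ts by (simp add: Op_def)
  ultimately have "\<exists>n::nat. n \<ge> 1 \<and> x [^] n \<in> Op"
    by (rule TP[unfolded topologically_periodic_def, rule_format, OF x conjI])
  then obtain m where "x [^] Suc m \<in> Op" by (metis One_nat_def Suc_le_D)
  moreover have "inv x \<otimes> x [^] Suc m = x [^] m"
    unfolding nat_pow_Suc2[OF x] using x by (simp add: m_assoc[symmetric])
  ultimately have "x [^] m \<notin> F" by (simp add: Op_def)
  with powers show False by blast
qed

lemma Lawson_inv_continuous_at_one_if_regular_hom:
  assumes P: "paratopological_group G T" and L: "Lawson G T"
    and PH: "paratopological_group H S" and TP: "topologically_periodic H S"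
    and hom: "h \<in> hom G H" and reg: "regular_map T S h"
    and U: "openin T U" "\<one>\<^bsub>G\<^esub> \<in> U"
  shows "\<exists>W. openin T W \<and> \<one>\<^bsub>G\<^esub> \<in> W \<and> (\<forall>x\<in>W. inv\<^bsub>G\<^esub> x \<in> U)"
proof -
  interpret G: group G using P by (simp add: paratopological_group_def)
  have tsG: "topspace T = carrier G" using P by (simp add: paratopological_group_def)
  interpret group_hom G H h
    using PH hom by (simp add: group_hom_def group_hom_axioms_def paratopological_group_def)
  have "\<exists>F. closedin S F \<and> closedin T {z \<in> topspace T. h z \<in> F} \<and>
          \<one>\<^bsub>G\<^esub> \<in> T interior_of {z \<in> topspace T. h z \<in> F} \<and>
          {z \<in> topspace T. h z \<in> F} \<subseteq> U"
    using reg[unfolded regular_map_def, THEN conjunct2, rule_format, OF _ conjI[OF U]] tsG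
    by simp
  then obtain F where F: "closedin S F"
    and one_N: "\<one>\<^bsub>G\<^esub> \<in> T interior_of {z \<in> topspace T. h z \<in> F}"
    and NU: "{z \<in> topspace T. h z \<in> F} \<subseteq> U"
    by blast
  define N where "N = {z \<in> topspace T. h z \<in> F}"
  have "openin T (T interior_of N) \<and> \<one>\<^bsub>G\<^esub> \<in> T interior_of N"
    using one_N by (simp add: N_def)
  from L[unfolded Lawson_def, rule_format, OF this]
  obtain V where "V \<subseteq> T interior_of N" and one_V: "\<one>\<^bsub>G\<^esub> \<in> T interior_of V"
    and V_semigroup: "\<forall>x\<in>V. \<forall>y\<in>V. x \<otimes>\<^bsub>G\<^esub> y \<in> V"
    by (elim exE conjE)
  have VN: "V \<subseteq> N"
    using \<open>V \<subseteq> T interior_of N\<close> by (rule subset_trans[OF _ interior_of_subset])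
  have "N \<subseteq> carrier G" using tsG by (simp add: N_def)
  with VN have VG: "V \<subseteq> carrier G" by (rule subset_trans)
  have inv_U: "inv\<^bsub>G\<^esub> x \<in> U" if "x \<in> T interior_of V" for x
  proof -
    have xV: "x \<in> V" using interior_of_subset that by (rule subsetD)
    with VG have xG: "x \<in> carrier G" by (rule subsetD)
    have "h x [^]\<^bsub>H\<^esub> n \<in> F" for n :: nat
    proof (cases n)
      case 0
      have "\<one>\<^bsub>G\<^esub> \<in> N" using interior_of_subset one_N unfolding N_def by (rule subsetD)
      then show ?thesis using 0 by (simp add: N_def)
    next
      case (Suc k)
      then have "x [^]\<^bsub>G\<^esub> n \<in> V"
        using G.nat_pow_Suc_in_subsemigroup[OF xV VG V_semigroup] by simp
      with VN have "x [^]\<^bsub>G\<^esub> n \<in> N" by (rule subsetD)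
      then show ?thesis using xG by (simp add: N_def hom_nat_pow[symmetric])
    qed
    then have "inv\<^bsub>H\<^esub> h x \<in> F"
      using topologically_periodic_inv_in_closed_powers[OF PH TP F] xG by simp
    then have "inv\<^bsub>G\<^esub> x \<in> N" using xG tsG by (simp add: N_def hom_inv)
    with NU show ?thesis unfolding N_def by (rule subsetD)
  qed
  show ?thesis
    by (intro exI[of _ "T interior_of V"] conjI ballI openin_interior_of one_V inv_U)
qed

theorem proposition4:
  fixes G :: "('a, 'm) monoid_scheme" and T :: "'a topology"
    and H :: "('b, 'n) monoid_scheme" and S :: "'b topology" and h :: "'a \<Rightarrow> 'b"
  assumes "paratopological_group G T"
    and "Lawson G T"
    and "TPTG_regular_witness G T H S h"
  shows "topological_group G T"
proof -
  have "paratopological_group H S" "topologically_periodic H S" "h \<in> hom G H" "regular_map T S h"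
    using assms(3) by (auto simp: TPTG_regular_witness_def topological_group_def)
  from Lawson_inv_continuous_at_one_if_regular_hom[OF assms(1,2) this]
  show ?thesis by (rule topological_group_if_inv_continuous_at_one[OF assms(1)])
qed

end
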